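(* Let $\Omega\subset\mathbb{R}^n$ be a domain with $n>2$, and let $U$ be a mesa function on $\Omega$ (as defined in the context) with exponent $\alpha$, where $0<\alpha<\frac{n-2}{2}$. Then $U\in H^1(\Omega)$.
   Context: $H^1(\Omega)$ denotes the Sobolev space of $L^2(\Omega)$ functions whose weak first derivatives lie in $L^2(\Omega)$. Mesa function: fix $c\in\Omega$, $T>0$ with $\overline{B(c,T)}\subset\Omega$ (open ball $B(c,T)$ compactly contained in $\Omega$), real numbers $a<b$, and an exponent $\alpha\in(0,\frac{n-2}{2})$. Write $r=|x-c|$. Define radii inductively: $r_1^+=T/2$; given $r_m^+$, let $s_m^+\in(0,r_m^+)$ be the number with $(s_m^+)^{-\alpha}-(r_m^+)^{-\alpha}=b-a$; set $s_m^-=s_m^+/2$; let $r_m^-\in(0,s_m^-)$ be the number with $(r_m^-)^{-\alpha}-(s_m^-)^{-\alpha}=b-a$; set $r_{m+1}^+=r_m^-/2$. The mesa function $U$ (defined for $x\neq c$) is the radial function $U=0$ for $r\ge T$; $U=-\frac{2a}{T}r+2a$ for $r_1^+\le r\le T$; and for each $m\ge1$: $U=r^{-\alpha}-(r_m^+)^{-\alpha}+a$ for $s_m^+\le r\le r_m^+$; $U=b$ for $s_m^-\le r\le s_m^+$; $U=b-(r^{-\alpha}-(s_m^-)^{-\alpha})$ for $r_m^-\le r\le s_m^-$; $U=a$ for $r_{m+1}^+\le r\le r_m^-$. *)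

theory Defs
  imports "HOL-Analysis.Analysis"
begin

definition pderiv_i :: "'n::finite \<Rightarrow> (real^'n \<Rightarrow> real) \<Rightarrow> (real^'n \<Rightarrow> real)" where
  "pderiv_i i f = (\<lambda>x. frechet_derivative f (at x) (axis i 1))"

text \<open>Test functions C_c^infinity(Omega): all iterated partial derivatives exist and are
  (Frechet) differentiable everywhere (hence phi is C^infinity), and phi vanishes outside a
  compact subset of Omega.\<close>
definition test_fun :: "(real^'n::finite) set \<Rightarrow> (real^'n \<Rightarrow> real) \<Rightarrow> bool" where
  "test_fun \<Omega> \<phi> \<longleftrightarrow>
     (\<forall>is :: 'n list. \<forall>x. (foldr pderiv_i is \<phi>) differentiable (at x)) \<and>
     (\<exists>K. compact K \<and> K \<subseteq> \<Omega> \<and> (\<forall>x. x \<notin> K \<longrightarrow> \<phi> x = 0))"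

definition L2_on :: "(real^'n::finite) set \<Rightarrow> (real^'n \<Rightarrow> real) \<Rightarrow> bool" where
  "L2_on \<Omega> u \<longleftrightarrow> u \<in> borel_measurable (lebesgue_on \<Omega>) \<and>
                    integrable (lebesgue_on \<Omega>) (\<lambda>x. (u x)\<^sup>2)"

definition weak_pderiv :: "(real^'n::finite) set \<Rightarrow> 'n \<Rightarrow> (real^'n \<Rightarrow> real) \<Rightarrow> (real^'n \<Rightarrow> real) \<Rightarrow> bool" where
  "weak_pderiv \<Omega> i u g \<longleftrightarrow>
     (\<forall>\<phi>. test_fun \<Omega> \<phi> \<longrightarrow>
        integrable (lebesgue_on \<Omega>) (\<lambda>x. u x * pderiv_i i \<phi> x) \<and>
        integrable (lebesgue_on \<Omega>) (\<lambda>x. g x * \<phi> x) \<and>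
        (\<integral>x. u x * pderiv_i i \<phi> x \<partial>lebesgue_on \<Omega>) = - (\<integral>x. g x * \<phi> x \<partial>lebesgue_on \<Omega>))"

definition H1 :: "(real^'n::finite) set \<Rightarrow> (real^'n \<Rightarrow> real) \<Rightarrow> bool" where
  "H1 \<Omega> u \<longleftrightarrow> L2_on \<Omega> u \<and> (\<forall>i. \<exists>g. L2_on \<Omega> g \<and> weak_pderiv \<Omega> i u g)"

text \<open>Given r = r_m^+, the number s in (0,r) with s^(-alpha) - r^(-alpha) = b - a.\<close>
definition mesa_sp :: "real \<Rightarrow> real \<Rightarrow> real \<Rightarrow> real \<Rightarrow> real" where
  "mesa_sp a b \<alpha> r = (r powr (-\<alpha>) + (b - a)) powr (-1/\<alpha>)"

definition mesa_sm :: "real \<Rightarrow> real \<Rightarrow> real \<Rightarrow> real \<Rightarrow> real" where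
  "mesa_sm a b \<alpha> r = mesa_sp a b \<alpha> r / 2"

text \<open>r_m^- in (0, s_m^-) with r^(-alpha) - (s_m^-)^(-alpha) = b - a.\<close>
definition mesa_rm :: "real \<Rightarrow> real \<Rightarrow> real \<Rightarrow> real \<Rightarrow> real" where
  "mesa_rm a b \<alpha> r = (mesa_sm a b \<alpha> r powr (-\<alpha>) + (b - a)) powr (-1/\<alpha>)"

text \<open>mesa_rp T a b alpha k = r_(k+1)^+ (0-based indexing): r_1^+ = T/2,
  r_(m+1)^+ = r_m^- / 2.\<close>
primrec mesa_rp :: "real \<Rightarrow> real \<Rightarrow> real \<Rightarrow> real \<Rightarrow> nat \<Rightarrow> real" where
  "mesa_rp T a b \<alpha> 0 = T / 2"
| "mesa_rp T a b \<alpha> (Suc k) = mesa_rm a b \<alpha> (mesa_rp T a b \<alpha> k) / 2"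

text \<open>Radial profile of the mesa function, for rho > 0. On the k-th block
  [r_(k+2)^+, r_(k+1)^+) the formulas of the paper are used (0-based k).\<close>
definition mesa_profile :: "real \<Rightarrow> real \<Rightarrow> real \<Rightarrow> real \<Rightarrow> real \<Rightarrow> real" where
  "mesa_profile T a b \<alpha> \<rho> =
    (if \<rho> \<ge> T then 0
     else if \<rho> \<ge> T / 2 then - (2 * a / T) * \<rho> + 2 * a
     else
       (let k = (SOME k. mesa_rp T a b \<alpha> (Suc k) \<le> \<rho> \<and> \<rho> < mesa_rp T a b \<alpha> k);
            rp = mesa_rp T a b \<alpha> k;
            sp = mesa_sp a b \<alpha> rp;
            sm = mesa_sm a b \<alpha> rp;
            rm = mesa_rm a b \<alpha> rp
        in if sp \<le> \<rho> then \<rho> powr (-\<alpha>) - rp powr (-\<alpha>) + a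
           else if sm \<le> \<rho> then b
           else if rm \<le> \<rho> then b - (\<rho> powr (-\<alpha>) - sm powr (-\<alpha>))
           else a))"

text \<open>The mesa function U(x) = profile(|x - c|) for x \<noteq> c; the value at x = c (a null set)
  is irrelevant and set to 0.\<close>
definition mesa :: "real^'n::finite \<Rightarrow> real \<Rightarrow> real \<Rightarrow> real \<Rightarrow> real \<Rightarrow> real^'n \<Rightarrow> real" where
  "mesa c T a b \<alpha> x = (if x = c then 0 else mesa_profile T a b \<alpha> (norm (x - c)))"

end

theory Submission
  imports Defs
begin

text \<open>
  \<open>U\<close> is bounded and vanishes outside \<open>cball c T\<close>, so it lies in \<open>L\<^sup>2\<close>. Away from a set
  of radii accumulating only at \<open>0\<close>, the radial profile \<open>P\<close> is smooth with
  \<open>\<bar>P' \<rho>\<bar> \<le> \<alpha> \<rho> powr (-\<alpha>-1) + const\<close>, and \<open>P\<close> is continuous on \<open>(0,\<infinity>)\<close> because the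
  pieces match at the block ends. The candidate weak derivative is
  \<open>g\<^sub>i x = P'(|x - c|) (x - c)\<^sub>i / |x - c|\<close>; since \<open>2\<alpha> + 2 < n\<close>, \<open>|x - c| powr (-2\<alpha>-2)\<close> is
  integrable near \<open>c\<close>, so \<open>g\<^sub>i \<in> L\<^sup>2\<close>. On every line in direction \<open>e\<^sub>i\<close> missing \<open>c\<close>
  (almost every line, as \<open>n \<ge> 2\<close>) the restriction of \<open>U\<close> is continuous and piecewise \<open>C\<^sup>1\<close>,
  so one can integrate by parts against \<open>tent t * \<phi>(x + t e\<^sub>i)\<close>; averaging over all lines
  with Fubini, where \<open>\<integral> tent = 1\<close> and \<open>\<integral> tent' = 0\<close>, gives \<open>\<integral> U \<partial>\<^sub>i\<phi> = - \<integral> g\<^sub>i \<phi>\<close>.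
\<close>

section \<open>Integrability near a point singularity\<close>

lemma dyadic_shell_exists:
  fixes R t :: real
  assumes "0 < t" "t \<le> R"
  shows "\<exists>j. R / 2 ^ Suc j < t \<and> t \<le> R / 2 ^ j"
proof -
  have R: "R > 0" using assms by simp
  obtain N where "(1/2::real) ^ N < t / R" using real_arch_pow_inv[of "t/R" "1/2"] assms R by auto
  then have "R / 2 ^ N < t" using R by (simp add: field_simps power_divide)
  moreover have "R / 2 ^ Suc N < R / 2 ^ N" using R by (simp add: field_simps)
  ultimately have ex: "R / 2 ^ Suc N < t" by linarith
  define j where "j = (LEAST j. R / 2 ^ Suc j < t)"
  have "R / 2 ^ Suc j < t" unfolding j_def by (rule LeastI[of _ N]) (rule ex)
  moreover have "t \<le> R / 2 ^ j"
  proof (cases j)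
    case (Suc i)
    then have "\<not> R / 2 ^ Suc i < t" unfolding j_def by (intro not_less_Least) simp
    then show ?thesis using Suc by simp
  qed (use assms in simp)
  ultimately show ?thesis by blast
qed

lemma dyadic_powr_neg:
  fixes R p :: real
  assumes "R > 0"
  shows "(R / 2 ^ Suc k) powr (-p) = R powr (-p) * 2 powr p * (2 powr p) ^ k"
proof -
  have "(2::real) ^ Suc k = 2 powr real (Suc k)" by (rule powr_realpow[symmetric]) simp
  then have "(R / 2 ^ Suc k) powr (-p) = R powr (-p) / (2 powr real (Suc k)) powr (-p)"
    using assms by (simp add: powr_divide)
  also have "\<dots> = R powr (-p) * 2 powr (real (Suc k) * p)"
    by (simp add: powr_powr powr_minus divide_inverse)
  also have "2 powr (real (Suc k) * p) = 2 powr p * (2 powr p) ^ k"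
    by (simp add: powr_power powr_add[symmetric] algebra_simps)
  finally show ?thesis by simp
qed

lemma dyadic_power:
  fixes R :: real
  shows "(R / 2 ^ k) ^ n = R ^ n * (2 powr (- real n)) ^ k"
proof -
  have "(2 powr (- real n)) ^ k = inverse ((2::real) ^ k) ^ n"
    by (simp add: powr_power powr_minus powr_realpow[symmetric] powr_powr mult.commute power_inverse)
  then show ?thesis by (simp add: power_divide divide_inverse power_mult_distrib)
qed

text \<open>Cover the ball by the balls of radii \<open>R / 2^k\<close>; on the shell between radii
  \<open>R / 2^(k+1)\<close> and \<open>R / 2^k\<close> the integrand is at most \<open>(R / 2^(k+1)) powr (-p)\<close>,
  so the integral is dominated by a geometric series of ratio \<open>2 powr (p - DIM('a))\<close>.\<close>
lemma integrable_cball_norm_powr: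
  fixes c :: "'a::euclidean_space" and p R :: real
  assumes p: "0 < p" "p < real DIM('a)" and R: "R > 0"
  shows "integrable lborel (\<lambda>x. indicator (cball c R) x * norm (x - c) powr (-p))"
proof (rule integrableI_nonneg)
  show "(\<lambda>x. indicator (cball c R) x * norm (x - c) powr (-p)) \<in> borel_measurable lborel"
    using borel_closed[OF closed_cball, of c R] by measurable
  show "AE x in lborel. 0 \<le> indicator (cball c R) x * norm (x - c) powr (-p)" by auto
  define V where "V = unit_ball_vol (DIM('a))"
  define n where "n = DIM('a)"
  define q where "q = 2 powr (p - n)"
  define t where "t k = (R / 2 ^ Suc k) powr (-p) * (V * (R / 2 ^ k) ^ n)" for k
  have V: "V > 0" unfolding V_def by simp
  have q: "0 < q" "q < 1" unfolding q_def using p powr_less_mono[of "p - n" 0 2] by (auto simp: n_def)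
  have t_geometric: "t k = (R powr (-p) * 2 powr p * V * R ^ n) * q ^ k" for k
  proof -
    have "(2 powr p) ^ k * (2 powr (- real n)) ^ k = q ^ k"
      unfolding q_def by (simp add: power_mult_distrib[symmetric] powr_add[symmetric])
    then show ?thesis unfolding t_def dyadic_powr_neg[OF R] dyadic_power by (simp add: algebra_simps)
  qed
  have "summable t"
    unfolding t_geometric[abs_def] by (intro summable_mult summable_geometric) (use q in auto)
  define s where "s k x = ennreal ((R / 2 ^ Suc k) powr (-p)) * indicator (cball c (R / 2 ^ k)) x"
    for k x
  have bound: "ennreal (indicator (cball c R) x * norm (x - c) powr (-p)) \<le> (\<Sum>k. s k x)" for x
  proof (cases "x \<in> cball c R \<and> x \<noteq> c")
    case True
    then have "0 < norm (x - c)" "norm (x - c) \<le> R" by (auto simp: dist_norm norm_minus_commute)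
    then obtain j where j: "R / 2 ^ Suc j < norm (x - c)" "norm (x - c) \<le> R / 2 ^ j"
      using dyadic_shell_exists by blast
    have "ennreal (indicator (cball c R) x * norm (x - c) powr (-p)) = ennreal (norm (x - c) powr (-p))"
      using True by simp
    also have "\<dots> \<le> ennreal ((R / 2 ^ Suc j) powr (-p))"
      using j R p by (intro ennreal_leI powr_mono2') auto
    also have "\<dots> = s j x"
      using j by (simp add: s_def dist_norm norm_minus_commute)
    also have "\<dots> \<le> (\<Sum>k. s k x)"
      using sum_le_suminf[of "\<lambda>k. s k x" "{j}"] by (simp add: summableI)
    finally show ?thesis .
  next
    case False
    then show ?thesis by (auto simp: indicator_def)
  qed
  have s_meas: "s k \<in> borel_measurable lborel" for k
    unfolding s_def using borel_closed[OF closed_cball] by measurable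
  have s_integral: "(\<integral>\<^sup>+x. s k x \<partial>lborel) = ennreal (t k)" for k
  proof -
    have "(\<integral>\<^sup>+x. s k x \<partial>lborel)
        = ennreal ((R / 2 ^ Suc k) powr (-p)) * emeasure lborel (cball c (R / 2 ^ k))"
      unfolding s_def by (rule nn_integral_cmult_indicator) auto
    also have "emeasure lborel (cball c (R / 2 ^ k)) = ennreal (V * (R / 2 ^ k) ^ n)"
      using R by (subst emeasure_cball) (auto simp: V_def n_def)
    finally show ?thesis unfolding t_def using R V by (simp add: ennreal_mult)
  qed
  have "(\<integral>\<^sup>+x. ennreal (indicator (cball c R) x * norm (x - c) powr (-p)) \<partial>lborel)
      \<le> (\<integral>\<^sup>+x. (\<Sum>k. s k x) \<partial>lborel)"
    by (intro nn_integral_mono bound)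
  also have "\<dots> = (\<Sum>k. \<integral>\<^sup>+x. s k x \<partial>lborel)"
    by (rule nn_integral_suminf[OF s_meas])
  also have "\<dots> = (\<Sum>k. ennreal (t k))"
    by (simp only: s_integral)
  also have "\<dots> < \<infinity>"
  proof -
    have "0 \<le> t k" for k unfolding t_def using V R by simp
    from ennreal_suminf_neq_top[OF \<open>summable t\<close> this] show ?thesis by (simp add: top.not_eq_extremum)
  qed
  finally show "(\<integral>\<^sup>+x. ennreal (indicator (cball c R) x * norm (x - c) powr (-p)) \<partial>lborel) < \<infinity>" .
qed

lemma integrable_bounded_vanishing_outside_cball:
  fixes f :: "'a::euclidean_space \<Rightarrow> real"
  assumes "f \<in> borel_measurable borel" "\<And>x. \<bar>f x\<bar> \<le> B" "\<And>x. x \<notin> cball c R \<Longrightarrow> f x = 0"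
  shows "integrable lborel f"
proof (rule Bochner_Integration.integrable_bound)
  show "integrable lborel (\<lambda>x. B * indicator (cball c R) x)"
    using emeasure_lborel_cball_finite[of c R]
    by (intro Bochner_Integration.integrable_mult_right integrable_real_indicator) auto
  show "f \<in> borel_measurable lborel" using assms(1) by simp
  show "AE x in lborel. norm (f x) \<le> norm (B * indicator (cball c R) x)"
  proof (intro AE_I2)
    fix x
    show "norm (f x) \<le> norm (B * indicator (cball c R) x)"
      using assms(2)[of x] assms(3)[of x] by (cases "x \<in> cball c R") auto
  qed
qed

lemma integrable_bounded_by_norm_powr:
  fixes g :: "'a::euclidean_space \<Rightarrow> real"
  assumes "0 < p" "p < real DIM('a)" "R > 0" "g \<in> borel_measurable borel"
    and bound: "\<And>x. \<bar>g x\<bar> \<le> (A * norm (x - c) powr (-p) + K) * indicator (cball c R) x"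
  shows "integrable lborel g"
proof (rule Bochner_Integration.integrable_bound)
  show "integrable lborel (\<lambda>x. A * (indicator (cball c R) x * norm (x - c) powr (-p))
                               + K * indicator (cball c R) x)"
    using integrable_cball_norm_powr[OF assms(1-3)] emeasure_lborel_cball_finite[of c R]
    by (intro Bochner_Integration.integrable_add Bochner_Integration.integrable_mult_right
          integrable_real_indicator) auto
  show "g \<in> borel_measurable lborel" using assms(4) by simp
  show "AE x in lborel. norm (g x) \<le> norm (A * (indicator (cball c R) x * norm (x - c) powr (-p))
                                            + K * indicator (cball c R) x)"
  proof (intro AE_I2)
    fix x
    have "\<bar>g x\<bar> \<le> A * (indicator (cball c R) x * norm (x - c) powr (-p)) + K * indicator (cball c R) x"
      using bound[of x] by (simp add: algebra_simps)
    then show "norm (g x) \<le> norm (A * (indicator (cball c R) x * norm (x - c) powr (-p))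
                                  + K * indicator (cball c R) x)" by simp
  qed
qed

lemma integrable_square_bounded_by_norm_powr:
  fixes g :: "'a::euclidean_space \<Rightarrow> real"
  assumes "0 < p" "2 * p < real DIM('a)" "R > 0" "g \<in> borel_measurable borel"
    and bound: "\<And>x. \<bar>g x\<bar> \<le> (A * norm (x - c) powr (-p) + K) * indicator (cball c R) x"
  shows "integrable lborel (\<lambda>x. (g x)\<^sup>2)"
proof (rule integrable_bounded_by_norm_powr)
  fix x
  define r where "r = norm (x - c) powr (-p)"
  have "(g x)\<^sup>2 \<le> ((A * r + K) * indicator (cball c R) x)\<^sup>2"
    using bound[of x] unfolding r_def by (metis abs_le_square_iff abs_ge_self order.trans power2_abs)
  also have "\<dots> = (A * r + K)\<^sup>2 * indicator (cball c R) x"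
    by (simp add: indicator_def power_mult_distrib)
  also have "\<dots> \<le> (2 * A\<^sup>2 * r\<^sup>2 + 2 * K\<^sup>2) * indicator (cball c R) x"
  proof (rule mult_right_mono)
    have "0 \<le> (A * r - K)\<^sup>2" by simp
    then show "(A * r + K)\<^sup>2 \<le> 2 * A\<^sup>2 * r\<^sup>2 + 2 * K\<^sup>2" by (simp add: power2_eq_square algebra_simps)
  qed simp
  also have "r\<^sup>2 = norm (x - c) powr (- (2 * p))"
    unfolding r_def by (simp add: power2_eq_square powr_add[symmetric])
  finally show "\<bar>(g x)\<^sup>2\<bar> \<le> (2 * A\<^sup>2 * norm (x - c) powr (- (2 * p)) + 2 * K\<^sup>2) * indicator (cball c R) x"
    by simp
qed (use assms in auto)

section \<open>Averaging along parallel lines\<close>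

lemma
  fixes g :: "'a::euclidean_space \<Rightarrow> real"
  assumes g: "g \<in> borel_measurable borel"
  shows integrable_lborel_translate: "integrable lborel (\<lambda>x. g (x + v)) \<longleftrightarrow> integrable lborel g"
    and integral_lborel_translate: "(\<integral>x. g (x + v) \<partial>lborel) = (\<integral>x. g x \<partial>lborel)"
proof -
  have m: "(+) v \<in> measurable lborel borel" by simp
  have "integrable lborel g \<longleftrightarrow> integrable (distr lborel borel ((+) v)) g"
    by (simp add: lborel_distr_plus)
  also have "\<dots> \<longleftrightarrow> integrable lborel (\<lambda>x. g (v + x))"
    by (rule integrable_distr_eq[OF m g])
  finally show "integrable lborel (\<lambda>x. g (x + v)) \<longleftrightarrow> integrable lborel g" by (simp add: add.commute)
  have "(\<integral>x. g x \<partial>lborel) = (\<integral>x. g x \<partial>distr lborel borel ((+) v))"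
    by (simp add: lborel_distr_plus)
  also have "\<dots> = (\<integral>x. g (v + x) \<partial>lborel)"
    by (rule integral_distr[OF m g])
  finally show "(\<integral>x. g (x + v) \<partial>lborel) = (\<integral>x. g x \<partial>lborel)" by (simp add: add.commute)
qed

lemma
  fixes f :: "'a::euclidean_space \<Rightarrow> real" and w :: "real \<Rightarrow> real" and e :: 'a
  assumes f: "integrable lborel f" and w: "integrable lborel w"
  shows integrable_lborel_pair_line_shift:
      "integrable (lborel \<Otimes>\<^sub>M lborel) (\<lambda>(t, x). w t * f (x + t *\<^sub>R e))"
    and integral_lborel_pair_line_shift:
      "integral\<^sup>L (lborel \<Otimes>\<^sub>M lborel) (\<lambda>(t, x). w t * f (x + t *\<^sub>R e))
         = (\<integral>t. w t \<partial>lborel) * (\<integral>x. f x \<partial>lborel)"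
proof -
  have fm[measurable]: "f \<in> borel_measurable borel" using borel_measurable_integrable[OF f] by simp
  have wm[measurable]: "w \<in> borel_measurable borel" using borel_measurable_integrable[OF w] by simp
  have "(\<lambda>z. w (fst z) * f (snd z + fst z *\<^sub>R e)) \<in> borel_measurable (borel :: (real \<times> 'a) measure)"
    by (intro borel_measurable_times measurable_compose[OF _ wm] measurable_compose[OF _ fm]
          borel_measurable_continuous_onI continuous_intros)
  then have meas: "(\<lambda>(t, x). w t * f (x + t *\<^sub>R e)) \<in> borel_measurable (lborel \<Otimes>\<^sub>M (lborel :: 'a measure))"
    unfolding lborel_prod measurable_lborel1 by (simp add: case_prod_unfold)
  have "(\<lambda>x. norm (f x)) \<in> borel_measurable borel" by measurable
  from integral_lborel_translate[OF this]
  have inner_norm: "(\<integral>x. norm (w t * f (x + t *\<^sub>R e)) \<partial>lborel) = norm (w t) * (\<integral>x. norm (f x) \<partial>lborel)"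
    for t by (simp add: abs_mult)
  show I: "integrable (lborel \<Otimes>\<^sub>M lborel) (\<lambda>(t, x). w t * f (x + t *\<^sub>R e))"
  proof (rule lborel_pair.Fubini_integrable[OF meas])
    show "integrable lborel (\<lambda>t. \<integral>x. norm (case (t, x) of (t, x) \<Rightarrow> w t * f (x + t *\<^sub>R e)) \<partial>lborel)"
      unfolding case_prod_conv inner_norm using w by (intro integrable_mult_left integrable_norm) auto
    show "AE t in lborel. integrable lborel (\<lambda>x. case (t, x) of (t, x) \<Rightarrow> w t * f (x + t *\<^sub>R e))"
      using f by (simp add: integrable_lborel_translate)
  qed
  have "integral\<^sup>L (lborel \<Otimes>\<^sub>M lborel) (\<lambda>(t, x). w t * f (x + t *\<^sub>R e))
        = (\<integral>t. (\<integral>x. w t * f (x + t *\<^sub>R e) \<partial>lborel) \<partial>lborel)"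
    using lborel_pair.integral_fst'[OF I] by simp
  also have "\<dots> = (\<integral>t. w t * (\<integral>x. f x \<partial>lborel) \<partial>lborel)"
    by (simp add: integral_lborel_translate)
  finally show "integral\<^sup>L (lborel \<Otimes>\<^sub>M lborel) (\<lambda>(t, x). w t * f (x + t *\<^sub>R e))
         = (\<integral>t. w t \<partial>lborel) * (\<integral>x. f x \<partial>lborel)" by simp
qed

definition tent :: "real \<Rightarrow> real" where
  "tent t = max 0 (1 - \<bar>t\<bar>)"

definition tent_deriv :: "real \<Rightarrow> real" where
  "tent_deriv t = indicator {-1<..<0} t - indicator {0<..<1} t"

lemma continuous_on_tent: "continuous_on S tent"
  unfolding tent_def by (intro continuous_intros)

lemma tent_eq_0: "t \<notin> {-1<..<1} \<Longrightarrow> tent t = 0"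
  by (auto simp: tent_def)

lemma tent_deriv_eq_0: "t \<notin> {-1<..<1} \<Longrightarrow> tent_deriv t = 0"
  by (auto simp: tent_deriv_def)

lemma has_real_derivative_tent:
  assumes "t \<in> {-1<..<1} - {0}"
  shows "(tent has_real_derivative tent_deriv t) (at t)"
proof (cases "t < 0")
  case True
  have "((\<lambda>t. 1 + t) has_real_derivative tent_deriv t) (at t)"
    using assms True by (auto simp: tent_deriv_def intro!: derivative_eq_intros)
  then show ?thesis
    by (rule has_field_derivative_transform_within_open[of _ _ _ "{-1<..<0}"])
       (use assms True in \<open>auto simp: tent_def\<close>)
next
  case False
  then have t: "0 < t" "t < 1" using assms by auto
  have "((\<lambda>t. 1 - t) has_real_derivative tent_deriv t) (at t)"
    using t by (auto simp: tent_deriv_def intro!: derivative_eq_intros)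
  then show ?thesis
    by (rule has_field_derivative_transform_within_open[of _ _ _ "{0<..<1}"])
       (use t in \<open>auto simp: tent_def\<close>)
qed

lemma integrable_tent: "integrable lborel tent"
proof (rule integrable_bounded_vanishing_outside_cball[where B = 1 and c = 0 and R = 1])
  show "tent \<in> borel_measurable borel" by (intro borel_measurable_continuous_onI continuous_on_tent)
qed (auto simp: tent_def)

lemma integrable_tent_deriv: "integrable lborel tent_deriv"
proof (rule integrable_bounded_vanishing_outside_cball[where B = 1 and c = 0 and R = 1])
  show "tent_deriv \<in> borel_measurable borel" unfolding tent_deriv_def by measurable
qed (auto simp: tent_deriv_def indicator_def)

lemma integral_lborel_eq_if_has_integral_interval:
  fixes f :: "real \<Rightarrow> real"
  assumes "integrable lborel f" "(f has_integral I) {-1..1}" "\<And>t. t \<notin> {-1<..<1} \<Longrightarrow> f t = 0"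
  shows "(\<integral>t. f t \<partial>lborel) = I"
proof -
  have "(f has_integral I) UNIV"
    by (rule has_integral_on_superset[OF assms(2)]) (use assms(3) in auto)
  with has_integral_integral_lborel[OF assms(1)] show ?thesis
    using has_integral_unique by blast
qed

lemma integral_tent_deriv: "(\<integral>t. tent_deriv t \<partial>lborel) = 0"
proof -
  have "(tent_deriv has_integral (tent 1 - tent (-1))) {-1..1}"
    by (rule fundamental_theorem_of_calculus_interior_strong[of "{0}"])
       (use has_real_derivative_tent in \<open>auto simp: has_real_derivative_iff_has_vector_derivative[symmetric]
          intro: continuous_on_tent\<close>)
  then show ?thesis
    by (intro integral_lborel_eq_if_has_integral_interval integrable_tent_deriv tent_deriv_eq_0)
       (simp add: tent_def)
qed

lemma integral_tent: "(\<integral>t. tent t \<partial>lborel) = 1"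
proof -
  define F where "F t = 1/2 + t - t * \<bar>t\<bar> / 2" for t :: real
  have F_deriv: "(F has_real_derivative tent t) (at t)" if t: "t \<in> {-1<..<1} - {0}" for t
  proof (cases "t < 0")
    case True
    have "((\<lambda>t. 1/2 + t + t * t / 2) has_real_derivative tent t) (at t)"
      using t True by (auto simp: tent_def intro!: derivative_eq_intros)
    then show ?thesis
      by (rule has_field_derivative_transform_within_open[of _ _ _ "{-1<..<0}"])
         (use True t in \<open>auto simp: F_def\<close>)
  next
    case False
    with t have "0 < t" "t < 1" by auto
    then have "((\<lambda>t. 1/2 + t - t * t / 2) has_real_derivative tent t) (at t)"
      by (auto simp: tent_def intro!: derivative_eq_intros)
    then show ?thesis
      by (rule has_field_derivative_transform_within_open[of _ _ _ "{0<..<1}"])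
         (use \<open>0 < t\<close> \<open>t < 1\<close> in \<open>auto simp: F_def\<close>)
  qed
  have "continuous_on {-1..1} F" unfolding F_def by (intro continuous_intros) auto
  then have "(tent has_integral (F 1 - F (-1))) {-1..1}"
    by (intro fundamental_theorem_of_calculus_interior_strong[of "{0}"])
       (use F_deriv in \<open>auto simp: has_real_derivative_iff_has_vector_derivative[symmetric]\<close>)
  then show ?thesis
    by (intro integral_lborel_eq_if_has_integral_interval integrable_tent tent_eq_0) (simp add: F_def)
qed

text \<open>The tent localises the integration by parts in the line parameter, so no cut-off of
  \<open>\<phi>\<close> is needed.\<close>
lemma tent_averaging_identity:
  fixes U g \<phi> h :: "'a::euclidean_space \<Rightarrow> real" and e :: 'a
  assumes Uh: "integrable lborel (\<lambda>x. U x * h x)" and U\<phi>: "integrable lborel (\<lambda>x. U x * \<phi> x)"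
    and g\<phi>: "integrable lborel (\<lambda>x. g x * \<phi> x)"
    and lines: "AE x in lborel. ((\<lambda>t. tent t * (U (x + t *\<^sub>R e) * h (x + t *\<^sub>R e))
      + tent_deriv t * (U (x + t *\<^sub>R e) * \<phi> (x + t *\<^sub>R e))
      + tent t * (g (x + t *\<^sub>R e) * \<phi> (x + t *\<^sub>R e))) has_integral 0) UNIV"
  shows "(\<integral>x. U x * h x \<partial>lborel) = - (\<integral>x. g x * \<phi> x \<partial>lborel)"
proof -
  define Q where "Q t x = tent t * (U (x + t *\<^sub>R e) * h (x + t *\<^sub>R e))
      + tent_deriv t * (U (x + t *\<^sub>R e) * \<phi> (x + t *\<^sub>R e))
      + tent t * (g (x + t *\<^sub>R e) * \<phi> (x + t *\<^sub>R e))" for t x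
  let ?q1 = "\<lambda>(t, x). tent t * (U (x + t *\<^sub>R e) * h (x + t *\<^sub>R e))"
  let ?q2 = "\<lambda>(t, x). tent_deriv t * (U (x + t *\<^sub>R e) * \<phi> (x + t *\<^sub>R e))"
  let ?q3 = "\<lambda>(t, x). tent t * (g (x + t *\<^sub>R e) * \<phi> (x + t *\<^sub>R e))"
  have Q_split: "case_prod Q = (\<lambda>z. ?q1 z + ?q2 z + ?q3 z)" by (auto simp: Q_def)
  note integrable_q = integrable_lborel_pair_line_shift[OF Uh integrable_tent, of e]
    integrable_lborel_pair_line_shift[OF U\<phi> integrable_tent_deriv, of e]
    integrable_lborel_pair_line_shift[OF g\<phi> integrable_tent, of e]
  note integral_q = integral_lborel_pair_line_shift[OF Uh integrable_tent, of e]
    integral_lborel_pair_line_shift[OF U\<phi> integrable_tent_deriv, of e]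
    integral_lborel_pair_line_shift[OF g\<phi> integrable_tent, of e]
  have Q_integrable: "integrable (lborel \<Otimes>\<^sub>M lborel) (case_prod Q)"
    unfolding Q_split using integrable_q by (intro Bochner_Integration.integrable_add)
  have "integral\<^sup>L (lborel \<Otimes>\<^sub>M lborel) (case_prod Q)
      = integral\<^sup>L (lborel \<Otimes>\<^sub>M lborel) ?q1 + integral\<^sup>L (lborel \<Otimes>\<^sub>M lborel) ?q2
        + integral\<^sup>L (lborel \<Otimes>\<^sub>M lborel) ?q3"
    unfolding Q_split
    by (simp only: Bochner_Integration.integral_add Bochner_Integration.integrable_add integrable_q)
  also have "\<dots> = (\<integral>x. U x * h x \<partial>lborel) + (\<integral>x. g x * \<phi> x \<partial>lborel)"
    unfolding integral_q integral_tent integral_tent_deriv by simp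
  finally have "integral\<^sup>L (lborel \<Otimes>\<^sub>M lborel) (case_prod Q)
      = (\<integral>x. U x * h x \<partial>lborel) + (\<integral>x. g x * \<phi> x \<partial>lborel)" .
  moreover have "AE x in lborel. (\<integral>t. Q t x \<partial>lborel) = 0"
    using lborel_pair.AE_integrable_snd[OF Q_integrable] lines
  proof eventually_elim
    case (elim x)
    then show ?case
      using has_integral_integral_lborel[OF elim(1)] has_integral_unique unfolding Q_def by blast
  qed
  then have "(\<integral>x. (\<integral>t. Q t x \<partial>lborel) \<partial>lborel) = 0" by (rule integral_eq_zero_AE)
  then have "integral\<^sup>L (lborel \<Otimes>\<^sub>M lborel) (case_prod Q) = 0"
    using lborel_pair.integral_snd[OF Q_integrable] by simp
  ultimately show ?thesis by linarith
qed

lemma AE_line_avoids_point: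
  fixes c e :: "'a::euclidean_space"
  assumes "DIM('a) \<ge> 2"
  shows "AE x in lborel. \<forall>t. x + t *\<^sub>R e \<noteq> c"
proof -
  have "{x. \<exists>t. x + t *\<^sub>R e = c} \<subseteq> (+) c ` span {e}"
  proof
    fix x assume "x \<in> {x. \<exists>t. x + t *\<^sub>R e = c}"
    then obtain t where "x = c + (-t) *\<^sub>R e" by (auto simp: algebra_simps)
    moreover have "(-t) *\<^sub>R e \<in> span {e}" by (intro span_scale span_base) simp
    ultimately show "x \<in> (+) c ` span {e}" by blast
  qed
  moreover have "dim (span {e}) < DIM('a)" using assms dim_span dim_le_card[of "{e}"] by simp
  then have "negligible ((+) c ` span {e})"
    by (intro negligible_translation negligible_lowdim) auto
  ultimately have "{x. \<exists>t. x + t *\<^sub>R e = c} \<in> null_sets lebesgue"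
    using negligible_subset by (auto simp: negligible_iff_null_sets)
  then have "AE x in lebesgue. x \<notin> {x. \<exists>t. x + t *\<^sub>R e = c}" by (rule AE_not_in)
  then show ?thesis unfolding AE_completion_iff by simp
qed

lemma finite_quadratic_roots: "finite {t::real. t\<^sup>2 + 2 * p * t + q = 0}"
proof (rule finite_subset)
  show "{t::real. t\<^sup>2 + 2 * p * t + q = 0} \<subseteq> {-p + sqrt (p\<^sup>2 - q), -p - sqrt (p\<^sup>2 - q)}"
  proof
    fix t :: real assume "t \<in> {t. t\<^sup>2 + 2 * p * t + q = 0}"
    then have "(t + p)\<^sup>2 = p\<^sup>2 - q" by (simp add: power2_eq_square algebra_simps)
    then have "\<bar>t + p\<bar> = sqrt (p\<^sup>2 - q)" by (metis real_sqrt_abs)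
    then show "t \<in> {-p + sqrt (p\<^sup>2 - q), -p - sqrt (p\<^sup>2 - q)}" by auto
  qed
qed simp

lemma finite_line_sphere_intersection:
  fixes x c e :: "'a::real_inner"
  assumes "norm e = 1"
  shows "finite {t. norm (x + t *\<^sub>R e - c) = r}"
proof (rule finite_subset)
  define v where "v = x - c"
  have ee: "e \<bullet> e = 1" using assms by (simp add: dot_square_norm)
  show "{t. norm (x + t *\<^sub>R e - c) = r} \<subseteq> {t. t\<^sup>2 + 2 * (v \<bullet> e) * t + (v \<bullet> v - r\<^sup>2) = 0}"
  proof
    fix t assume "t \<in> {t. norm (x + t *\<^sub>R e - c) = r}"
    then have "(v + t *\<^sub>R e) \<bullet> (v + t *\<^sub>R e) = r\<^sup>2"
      by (simp add: v_def algebra_simps flip: power2_norm_eq_inner)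
    with ee show "t \<in> {t. t\<^sup>2 + 2 * (v \<bullet> e) * t + (v \<bullet> v - r\<^sup>2) = 0}"
      by (simp add: inner_add_left inner_add_right inner_commute power2_eq_square algebra_simps)
  qed
qed (rule finite_quadratic_roots)

lemma dist_line_point_bounded_below:
  fixes x c e :: "'a::real_normed_vector"
  assumes "\<forall>t. x + t *\<^sub>R e \<noteq> c"
  shows "\<exists>\<delta>>0. \<forall>t\<in>{-1..1}. \<delta> \<le> norm (x + t *\<^sub>R e - c)"
proof -
  have cont: "continuous_on {-1..1} (\<lambda>t. norm (x + t *\<^sub>R e - c))" by (intro continuous_intros)
  obtain t0 where "t0 \<in> {-1..1}" "\<forall>t\<in>{-1..1}. norm (x + t0 *\<^sub>R e - c) \<le> norm (x + t *\<^sub>R e - c)"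
    using continuous_attains_inf[OF compact_Icc _ cont] by auto
  moreover have "norm (x + t0 *\<^sub>R e - c) > 0" using assms by auto
  ultimately show ?thesis by blast
qed

lemma has_real_derivative_norm_line:
  fixes x c e :: "'a::real_inner"
  assumes "x + t *\<^sub>R e \<noteq> c"
  shows "((\<lambda>t. norm (x + t *\<^sub>R e - c)) has_real_derivative
            ((x + t *\<^sub>R e - c) \<bullet> e) / norm (x + t *\<^sub>R e - c)) (at t)"
proof -
  define y where "y = x + t *\<^sub>R e - c"
  have "((\<lambda>t. x + t *\<^sub>R e - c) has_derivative (\<lambda>s. s *\<^sub>R e)) (at t)"
    by (auto intro!: derivative_eq_intros)
  moreover have "(norm has_derivative (\<lambda>h. h \<bullet> sgn y)) (at y)"
    using has_derivative_norm[of y] assms by (simp add: y_def inner_commute)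
  ultimately have "((\<lambda>t. norm (x + t *\<^sub>R e - c)) has_derivative (\<lambda>s. (s *\<^sub>R e) \<bullet> sgn y)) (at t)"
    unfolding y_def by (rule has_derivative_compose)
  moreover have "(\<lambda>s. (s *\<^sub>R e) \<bullet> sgn y) = (*) ((y \<bullet> e) / norm y)"
    by (auto simp: sgn_div_norm inner_commute divide_inverse)
  ultimately show ?thesis unfolding has_field_derivative_def y_def by simp
qed

lemma has_real_derivative_along_line:
  fixes \<phi> :: "'a::real_normed_vector \<Rightarrow> real"
  assumes "\<phi> differentiable (at (x + t *\<^sub>R e))"
  shows "((\<lambda>t. \<phi> (x + t *\<^sub>R e)) has_real_derivative frechet_derivative \<phi> (at (x + t *\<^sub>R e)) e) (at t)"
proof -
  let ?D = "frechet_derivative \<phi> (at (x + t *\<^sub>R e))"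
  have D: "(\<phi> has_derivative ?D) (at (x + t *\<^sub>R e))" using assms frechet_derivative_works by blast
  have "((\<lambda>t. x + t *\<^sub>R e) has_derivative (\<lambda>s. s *\<^sub>R e)) (at t)"
    by (auto intro!: derivative_eq_intros)
  from has_derivative_compose[OF this D]
  have "((\<lambda>t. \<phi> (x + t *\<^sub>R e)) has_derivative (\<lambda>s. ?D (s *\<^sub>R e))) (at t)" .
  moreover have "(\<lambda>s. ?D (s *\<^sub>R e)) = (\<lambda>s. ?D e * s)"
    using has_derivative_linear[OF D] by (auto simp: linear_cmul mult.commute)
  ultimately show ?thesis unfolding has_field_derivative_def by simp
qed

lemma has_real_derivative_isCont_cong_open:
  assumes "open S" "\<rho> \<in> S" "\<And>y. y \<in> S \<Longrightarrow> f y = g y" "\<And>y. y \<in> S \<Longrightarrow> f' y = g' y"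
    and "(g has_real_derivative g' \<rho>) (at \<rho>)" "isCont g' \<rho>"
  shows "(f has_real_derivative f' \<rho>) (at \<rho>) \<and> isCont f' \<rho>"
proof
  have "(g has_real_derivative f' \<rho>) (at \<rho>)" using assms(2,4,5) by simp
  then show "(f has_real_derivative f' \<rho>) (at \<rho>)"
    by (rule has_field_derivative_transform_within_open[OF _ assms(1,2)]) (use assms(3) in auto)
  have "eventually (\<lambda>y. f' y = g' y) (nhds \<rho>)"
    unfolding eventually_nhds using assms(1,2,4) by blast
  then show "isCont f' \<rho>" using assms(6) isCont_cong by blast
qed

lemma
  fixes f :: "'a::euclidean_space \<Rightarrow> real"
  assumes \<Omega>: "\<Omega> \<in> sets lebesgue" and f: "f \<in> borel_measurable borel" "integrable lborel f"
    and vanishing: "\<And>x. x \<notin> \<Omega> \<Longrightarrow> f x = 0"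
  shows integrable_lebesgue_on_if_vanishing_outside: "integrable (lebesgue_on \<Omega>) f"
    and integral_lebesgue_on_if_vanishing_outside: "integral\<^sup>L (lebesgue_on \<Omega>) f = integral\<^sup>L lborel f"
proof -
  have \<Omega>': "\<Omega> \<inter> space lebesgue \<in> sets lebesgue" using \<Omega> by simp
  have restrict: "(\<lambda>x. indicator \<Omega> x *\<^sub>R f x) = f"
  proof
    fix x show "indicator \<Omega> x *\<^sub>R f x = f x" using vanishing[of x] by (cases "x \<in> \<Omega>") auto
  qed
  have fl: "f \<in> lborel \<rightarrow>\<^sub>M borel" using f by simp
  show "integrable (lebesgue_on \<Omega>) f"
    unfolding integrable_restrict_space[OF \<Omega>'] restrict integrable_completion[OF fl] by (rule f(2))
  show "integral\<^sup>L (lebesgue_on \<Omega>) f = integral\<^sup>L lborel f"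
    unfolding integral_restrict_space[OF \<Omega>'] restrict integral_completion[OF fl] ..
qed

lemma L2_on_if_vanishing_outside:
  assumes "\<Omega> \<in> sets lebesgue" "u \<in> borel_measurable borel" "integrable lborel (\<lambda>x. (u x)\<^sup>2)"
    and "\<And>x. x \<notin> \<Omega> \<Longrightarrow> u x = 0"
  shows "L2_on \<Omega> u"
  unfolding L2_on_def using assms
  by (auto intro!: integrable_lebesgue_on_if_vanishing_outside measurable_restrict_space1
      measurable_completion)

lemma bounded_if_continuous_vanishing_outside_compact:
  fixes f :: "'a::topological_space \<Rightarrow> real"
  assumes "continuous_on UNIV f" "compact K" "\<And>x. x \<notin> K \<Longrightarrow> f x = 0"
  shows "\<exists>B. \<forall>x. \<bar>f x\<bar> \<le> B"
proof -
  have "compact (f ` K)"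
    by (rule compact_continuous_image[OF continuous_on_subset[OF assms(1)] assms(2)]) auto
  then obtain B where "\<forall>y\<in>f ` K. \<bar>y\<bar> \<le> B" using compact_imp_bounded bounded_iff by (metis real_norm_def)
  then have "\<bar>f x\<bar> \<le> max B 0" for x using assms(3) by (cases "x \<in> K") force+
  then show ?thesis by blast
qed

lemma test_fun_differentiable: "test_fun \<Omega> \<phi> \<Longrightarrow> \<phi> differentiable (at x)"
  unfolding test_fun_def using foldr_Nil by (metis id_apply)

lemma test_fun_pderiv_differentiable: "test_fun \<Omega> \<phi> \<Longrightarrow> pderiv_i i \<phi> differentiable (at x)"
  unfolding test_fun_def by (drule conjunct1, drule spec[of _ "[i]"]) simp

lemma continuous_on_test_fun: "test_fun \<Omega> \<phi> \<Longrightarrow> continuous_on UNIV \<phi>"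
  by (intro continuous_at_imp_continuous_on ballI differentiable_imp_continuous_within
      test_fun_differentiable)

lemma continuous_on_test_fun_pderiv: "test_fun \<Omega> \<phi> \<Longrightarrow> continuous_on UNIV (pderiv_i i \<phi>)"
  by (intro continuous_at_imp_continuous_on ballI differentiable_imp_continuous_within
      test_fun_pderiv_differentiable)

lemma test_fun_bounded:
  assumes "test_fun \<Omega> \<phi>"
  shows "\<exists>B. \<forall>x. \<bar>\<phi> x\<bar> \<le> B"
proof -
  obtain K where K: "compact K" "\<And>x. x \<notin> K \<Longrightarrow> \<phi> x = 0"
    using assms unfolding test_fun_def by (elim conjE exE) simp
  show ?thesis
    using continuous_on_test_fun[OF assms] K by (rule bounded_if_continuous_vanishing_outside_compact)
qed

lemma test_fun_pderiv_bounded: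
  assumes "test_fun \<Omega> \<phi>"
  shows "\<exists>B. \<forall>x. \<bar>pderiv_i i \<phi> x\<bar> \<le> B"
proof -
  obtain K where K: "compact K" "\<And>x. x \<notin> K \<Longrightarrow> \<phi> x = 0"
    using assms unfolding test_fun_def by (elim conjE exE) simp
  have vanishing: "pderiv_i i \<phi> x = 0" if "x \<notin> K" for x
  proof -
    have "((\<lambda>_. 0) has_derivative (\<lambda>_. 0)) (at x)" by simp
    then have "(\<phi> has_derivative (\<lambda>_. 0)) (at x)"
      by (rule has_derivative_transform_within_open[of _ _ _ _ "- K"])
         (use that K in \<open>auto intro: compact_imp_closed\<close>)
    then show ?thesis by (simp add: pderiv_i_def frechet_derivative_at[symmetric])
  qed
  show ?thesis
    by (rule bounded_if_continuous_vanishing_outside_compact[of "pderiv_i i \<phi>" K,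
          OF continuous_on_test_fun_pderiv[OF assms] K(1) vanishing])
qed

lemma weak_pderiv_if_vanishing_outside:
  assumes \<Omega>: "\<Omega> \<in> sets lebesgue"
    and u: "u \<in> borel_measurable borel" "\<And>x. x \<notin> \<Omega> \<Longrightarrow> u x = 0"
    and g: "g \<in> borel_measurable borel" "\<And>x. x \<notin> \<Omega> \<Longrightarrow> g x = 0"
    and identity: "\<And>\<phi>. test_fun \<Omega> \<phi> \<Longrightarrow>
      integrable lborel (\<lambda>x. u x * pderiv_i i \<phi> x) \<and> integrable lborel (\<lambda>x. g x * \<phi> x) \<and>
      (\<integral>x. u x * pderiv_i i \<phi> x \<partial>lborel) = - (\<integral>x. g x * \<phi> x \<partial>lborel)"
  shows "weak_pderiv \<Omega> i u g"
  unfolding weak_pderiv_def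
proof (intro allI impI)
  fix \<phi> assume \<phi>: "test_fun \<Omega> \<phi>"
  have [measurable]: "\<phi> \<in> borel_measurable borel" "pderiv_i i \<phi> \<in> borel_measurable borel"
    using continuous_on_test_fun[OF \<phi>] continuous_on_test_fun_pderiv[OF \<phi>]
    by (auto intro: borel_measurable_continuous_onI)
  have [measurable]: "u \<in> borel_measurable borel" "g \<in> borel_measurable borel" using u g by simp_all
  have "(\<lambda>x. u x * pderiv_i i \<phi> x) \<in> borel_measurable borel" "(\<lambda>x. g x * \<phi> x) \<in> borel_measurable borel"
    by measurable
  with identity[OF \<phi>] u(2) g(2) show
    "integrable (lebesgue_on \<Omega>) (\<lambda>x. u x * pderiv_i i \<phi> x) \<and>
     integrable (lebesgue_on \<Omega>) (\<lambda>x. g x * \<phi> x) \<and>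
     (\<integral>x. u x * pderiv_i i \<phi> x \<partial>lebesgue_on \<Omega>) = - (\<integral>x. g x * \<phi> x \<partial>lebesgue_on \<Omega>)"
    by (simp add: \<Omega> integrable_lebesgue_on_if_vanishing_outside integral_lebesgue_on_if_vanishing_outside)
qed

section \<open>The radial profile\<close>

lemma radius_with_powr_gap:
  fixes \<alpha> d r :: real
  assumes "\<alpha> > 0" "d > 0" "r > 0"
  defines "s \<equiv> (r powr (-\<alpha>) + d) powr (-1/\<alpha>)"
  shows "0 < s" "s < r" "s powr (-\<alpha>) = r powr (-\<alpha>) + d"
proof -
  have pos: "r powr (-\<alpha>) > 0" "r powr (-\<alpha>) + d > 0"
    using assms(2,3) add_pos_pos[of "r powr (-\<alpha>)" d] by auto
  then show "0 < s" unfolding s_def by simp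
  show "s powr (-\<alpha>) = r powr (-\<alpha>) + d" unfolding s_def using assms(1) pos by (simp add: powr_powr)
  have "s < (r powr (-\<alpha>)) powr (-1/\<alpha>)" unfolding s_def
    by (rule powr_less_mono2_neg) (use assms pos in auto)
  then show "s < r" using assms(1,3) by (simp add: powr_powr)
qed

definition mesa_block :: "real \<Rightarrow> real \<Rightarrow> real \<Rightarrow> real \<Rightarrow> real \<Rightarrow> nat" where
  "mesa_block T a b \<alpha> \<rho> = (SOME k. mesa_rp T a b \<alpha> (Suc k) \<le> \<rho> \<and> \<rho> < mesa_rp T a b \<alpha> k)"

text \<open>\<open>block_profile a b \<alpha> r\<close> is the profile of the paper on the block
  \<open>r\<^sub>m\<^sub>+\<^sub>1\<^sup>+ \<le> \<rho> \<le> r\<^sub>m\<^sup>+\<close> with outer radius \<open>r = r\<^sub>m\<^sup>+\<close>; \<open>mesa_block\<close> selects \<open>m\<close> (0-based) exactly as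
  \<open>mesa_profile\<close> does.\<close>
definition block_profile :: "real \<Rightarrow> real \<Rightarrow> real \<Rightarrow> real \<Rightarrow> real \<Rightarrow> real" where
  "block_profile a b \<alpha> r \<rho> =
    (if mesa_sp a b \<alpha> r \<le> \<rho> then \<rho> powr (-\<alpha>) - r powr (-\<alpha>) + a
     else if mesa_sm a b \<alpha> r \<le> \<rho> then b
     else if mesa_rm a b \<alpha> r \<le> \<rho> then b - (\<rho> powr (-\<alpha>) - mesa_sm a b \<alpha> r powr (-\<alpha>))
     else a)"

definition block_profile_deriv :: "real \<Rightarrow> real \<Rightarrow> real \<Rightarrow> real \<Rightarrow> real \<Rightarrow> real" where
  "block_profile_deriv a b \<alpha> r \<rho> =
    (if mesa_sp a b \<alpha> r < \<rho> then -\<alpha> * \<rho> powr (-\<alpha>-1)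
     else if mesa_sm a b \<alpha> r < \<rho> then 0
     else if mesa_rm a b \<alpha> r < \<rho> then \<alpha> * \<rho> powr (-\<alpha>-1)
     else 0)"

definition mesa_profile_deriv :: "real \<Rightarrow> real \<Rightarrow> real \<Rightarrow> real \<Rightarrow> real \<Rightarrow> real" where
  "mesa_profile_deriv T a b \<alpha> \<rho> =
    (if T < \<rho> then 0
     else if T / 2 < \<rho> then - (2 * a / T)
     else if \<rho> \<le> 0 then 0
     else block_profile_deriv a b \<alpha> (mesa_rp T a b \<alpha> (mesa_block T a b \<alpha> \<rho>)) \<rho>)"

definition mesa_breakpoints :: "real \<Rightarrow> real \<Rightarrow> real \<Rightarrow> real \<Rightarrow> real set" where
  "mesa_breakpoints T a b \<alpha> = {T, T / 2} \<union> (\<Union>k. let r = mesa_rp T a b \<alpha> k in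
      {r, mesa_sp a b \<alpha> r, mesa_sm a b \<alpha> r, mesa_rm a b \<alpha> r})"

lemma countable_mesa_breakpoints: "countable (mesa_breakpoints T a b \<alpha>)"
  unfolding mesa_breakpoints_def Let_def by (intro countable_Un countable_UN) auto

locale mesa_parameters =
  fixes T a b \<alpha> :: real
  assumes T_pos: "T > 0" and a_less_b: "a < b" and alpha_pos: "\<alpha> > 0"
begin

abbreviation "rp \<equiv> mesa_rp T a b \<alpha>"
abbreviation "sp \<equiv> mesa_sp a b \<alpha>"
abbreviation "sm \<equiv> mesa_sm a b \<alpha>"
abbreviation "rm \<equiv> mesa_rm a b \<alpha>"
abbreviation "block \<equiv> mesa_block T a b \<alpha>"
abbreviation "profile \<equiv> mesa_profile T a b \<alpha>"
abbreviation "profile' \<equiv> mesa_profile_deriv T a b \<alpha>"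

lemma block_radii:
  assumes "r > 0"
  shows "0 < rm r" "rm r < sm r" "sm r < sp r" "sp r < r"
    and "sp r powr (-\<alpha>) = r powr (-\<alpha>) + (b - a)"
    and "rm r powr (-\<alpha>) = sm r powr (-\<alpha>) + (b - a)"
proof -
  note sp = radius_with_powr_gap[OF alpha_pos _ assms, of "b - a", folded mesa_sp_def]
  then have "0 < sm r" "sm r < sp r" using a_less_b by (auto simp: mesa_sm_def)
  note rm = radius_with_powr_gap[OF alpha_pos _ this(1), of "b - a", folded mesa_rm_def]
  show "0 < rm r" "rm r < sm r" "sm r < sp r" "sp r < r"
    "sp r powr (-\<alpha>) = r powr (-\<alpha>) + (b - a)" "rm r powr (-\<alpha>) = sm r powr (-\<alpha>) + (b - a)"
    using sp rm \<open>sm r < sp r\<close> a_less_b by auto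
qed

lemma rp_pos: "rp k > 0"
  by (induction k) (use T_pos block_radii in auto)

lemma rp_Suc_less_rm: "rp (Suc k) < rm (rp k)"
  using block_radii(1)[OF rp_pos[of k]] by simp

lemma rp_Suc_less_half: "rp (Suc k) < rp k / 2"
proof -
  have "rp (Suc k) = rm (rp k) / 2" "sm (rp k) = sp (rp k) / 2" by (simp_all add: mesa_sm_def)
  with block_radii(1-4)[OF rp_pos[of k]] show ?thesis by linarith
qed

lemma rp_antimono: "j \<le> k \<Longrightarrow> rp k \<le> rp j"
proof -
  have "rp (Suc n) \<le> rp n" for n using rp_Suc_less_half[of n] rp_pos[of n] by linarith
  then show "j \<le> k \<Longrightarrow> rp k \<le> rp j" by (rule lift_Suc_antimono_le)
qed

lemma rp_le_T_half: "rp k \<le> T / 2"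
  using rp_antimono[of 0 k] by simp

lemma rp_le_dyadic: "rp k \<le> T / 2 ^ Suc k"
proof (induction k)
  case (Suc k)
  have "rp (Suc k) < rp k / 2" by (rule rp_Suc_less_half)
  also have "\<dots> \<le> (T / 2 ^ Suc k) / 2" using Suc.IH by (rule divide_right_mono) simp
  finally show ?case by (simp del: mesa_rp.simps)
qed simp

lemma rp_eventually_less:
  assumes "\<delta> > 0"
  shows "\<exists>N. rp N < \<delta>"
proof -
  obtain N where "(1/2::real) ^ N < \<delta> / T" using real_arch_pow_inv[of "\<delta> / T" "1/2"] assms T_pos by auto
  then have "T / 2 ^ N < \<delta>" using T_pos by (simp add: field_simps power_divide)
  moreover have "T / 2 ^ Suc N \<le> T / 2 ^ N" using T_pos by (simp add: field_simps)
  ultimately show ?thesis using rp_le_dyadic[of N] by (intro exI[of _ N]) linarith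
qed

lemma block_unique:
  assumes "rp (Suc k) \<le> \<rho>" "\<rho> < rp k" "rp (Suc j) \<le> \<rho>" "\<rho> < rp j"
  shows "j = k"
  using rp_antimono[of "Suc j" k] rp_antimono[of "Suc k" j] assms
  by (cases j k rule: linorder_cases) auto

lemma block_exists:
  assumes "0 < \<rho>" "\<rho> < T / 2"
  shows "\<exists>k. rp (Suc k) \<le> \<rho> \<and> \<rho> < rp k"
proof -
  obtain N where N: "rp N < \<rho>" using rp_eventually_less assms by blast
  define m where "m = (LEAST m. rp m \<le> \<rho>)"
  have m: "rp m \<le> \<rho>" unfolding m_def by (rule LeastI[of _ N]) (use N in simp)
  then obtain k where k: "m = Suc k" using assms by (cases m) auto
  then have "\<not> rp k \<le> \<rho>" unfolding m_def by (intro not_less_Least) simp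
  then show ?thesis using m k by auto
qed

lemma block_eq:
  assumes "rp (Suc k) \<le> \<rho>" "\<rho> < rp k"
  shows "block \<rho> = k"
proof -
  have "rp (Suc (block \<rho>)) \<le> \<rho> \<and> \<rho> < rp (block \<rho>)"
    unfolding mesa_block_def by (rule someI[of _ k]) (use assms in auto)
  then show ?thesis using block_unique assms by blast
qed

lemma profile_outside: "T \<le> \<rho> \<Longrightarrow> profile \<rho> = 0"
  by (simp add: mesa_profile_def)

lemma profile_linear: "T / 2 \<le> \<rho> \<Longrightarrow> \<rho> \<le> T \<Longrightarrow> profile \<rho> = - (2 * a / T) * \<rho> + 2 * a"
  using T_pos by (auto simp: mesa_profile_def)

lemma block_profile_outer: "r > 0 \<Longrightarrow> block_profile a b \<alpha> r r = a"
  using block_radii(4)[of r] by (simp add: block_profile_def)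

lemma block_profile_inner: "\<rho> < rm r \<Longrightarrow> r > 0 \<Longrightarrow> block_profile a b \<alpha> r \<rho> = a"
  using block_radii(2-4)[of r] by (simp add: block_profile_def)

lemma profile_block_open:
  assumes "rp (Suc k) \<le> \<rho>" "\<rho> < rp k"
  shows "profile \<rho> = block_profile a b \<alpha> (rp k) \<rho>"
  using assms block_eq[OF assms] rp_le_T_half[of k] T_pos
  by (simp add: mesa_profile_def block_profile_def mesa_block_def[symmetric] Let_def del: mesa_rp.simps)

text \<open>Closing the block on the right uses that the profile takes the value \<open>a\<close> at every \<open>rp k\<close>.\<close>
lemma profile_block:
  assumes "rp (Suc k) \<le> \<rho>" "\<rho> \<le> rp k"
  shows "profile \<rho> = block_profile a b \<alpha> (rp k) \<rho>"
proof (cases "\<rho> = rp k")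
  case True
  have "profile \<rho> = a"
  proof (cases k)
    case 0
    then have "\<rho> = T / 2" using True by simp
    moreover have "profile (T / 2) = a" using T_pos profile_linear[of "T / 2"] by simp
    ultimately show ?thesis by (simp only:)
  next
    case (Suc j)
    then have "profile \<rho> = block_profile a b \<alpha> (rp j) \<rho>"
      using True rp_Suc_less_half[of j] rp_pos[of j] by (intro profile_block_open) auto
    also have "\<dots> = a" using True Suc rp_Suc_less_rm[of j] rp_pos[of j] by (intro block_profile_inner) auto
    finally show ?thesis .
  qed
  then show ?thesis using True block_profile_outer[OF rp_pos] by simp
qed (use assms profile_block_open in auto)

definition clip :: "real \<Rightarrow> real" where
  "clip y = min (b - a) (max 0 y)"

text \<open>Within a block the four formulas of the profile combine into one expression, which is
  manifestly continuous.\<close>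
definition block_profile_clipped :: "real \<Rightarrow> real \<Rightarrow> real" where
  "block_profile_clipped r \<rho> = a + clip (\<rho> powr (-\<alpha>) - r powr (-\<alpha>)) - clip (\<rho> powr (-\<alpha>) - sm r powr (-\<alpha>))"

lemma clip_id: "0 \<le> y \<Longrightarrow> y \<le> b - a \<Longrightarrow> clip y = y"
  by (simp add: clip_def)

lemma clip_eq_0: "y \<le> 0 \<Longrightarrow> clip y = 0"
  using a_less_b by (simp add: clip_def)

lemma clip_eq_gap: "b - a \<le> y \<Longrightarrow> clip y = b - a"
  using a_less_b by (simp add: clip_def)

lemma clip_bounds: "0 \<le> clip y" "clip y \<le> b - a"
  using a_less_b by (auto simp: clip_def)

lemma powr_neg_antimono: "0 < x \<Longrightarrow> x \<le> y \<Longrightarrow> y powr (-\<alpha>) \<le> x powr (-\<alpha>)"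
  using alpha_pos by (intro powr_mono2') auto

lemma powr_neg_strict_antimono: "0 < x \<Longrightarrow> x < y \<Longrightarrow> y powr (-\<alpha>) < x powr (-\<alpha>)"
  using alpha_pos by (intro powr_less_mono2_neg) auto

lemma block_profile_eq_clipped:
  assumes "r > 0" "0 < \<rho>" "\<rho> \<le> r"
  shows "block_profile a b \<alpha> r \<rho> = block_profile_clipped r \<rho>"
proof -
  note R = block_radii[OF assms(1)]
  consider "sp r \<le> \<rho>" | "sm r \<le> \<rho>" "\<rho> < sp r" | "rm r \<le> \<rho>" "\<rho> < sm r" | "\<rho> < rm r"
    by linarith
  then show ?thesis
  proof cases
    case 1
    then have "clip (\<rho> powr (-\<alpha>) - r powr (-\<alpha>)) = \<rho> powr (-\<alpha>) - r powr (-\<alpha>)"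
      using powr_neg_antimono[of \<rho> r] powr_neg_antimono[of "sp r" \<rho>] R assms by (intro clip_id) auto
    moreover have "clip (\<rho> powr (-\<alpha>) - sm r powr (-\<alpha>)) = 0"
      using powr_neg_antimono[of "sm r" \<rho>] R 1 assms by (intro clip_eq_0) auto
    ultimately show ?thesis using 1 by (simp add: block_profile_def block_profile_clipped_def)
  next
    case 2
    then have "clip (\<rho> powr (-\<alpha>) - r powr (-\<alpha>)) = b - a"
      using powr_neg_strict_antimono[of \<rho> "sp r"] R assms by (intro clip_eq_gap) auto
    moreover have "clip (\<rho> powr (-\<alpha>) - sm r powr (-\<alpha>)) = 0"
      using powr_neg_antimono[of "sm r" \<rho>] R 2 assms by (intro clip_eq_0) auto
    ultimately show ?thesis using 2 by (simp add: block_profile_def block_profile_clipped_def)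
  next
    case 3
    then have "clip (\<rho> powr (-\<alpha>) - r powr (-\<alpha>)) = b - a"
      using powr_neg_strict_antimono[of \<rho> "sp r"] R assms by (intro clip_eq_gap) auto
    moreover have "clip (\<rho> powr (-\<alpha>) - sm r powr (-\<alpha>)) = \<rho> powr (-\<alpha>) - sm r powr (-\<alpha>)"
      using powr_neg_antimono[of \<rho> "sm r"] powr_neg_antimono[of "rm r" \<rho>] R 3 assms
      by (intro clip_id) auto
    ultimately show ?thesis using 3 R by (auto simp: block_profile_def block_profile_clipped_def)
  next
    case 4
    then have "clip (\<rho> powr (-\<alpha>) - r powr (-\<alpha>)) = b - a"
      using powr_neg_strict_antimono[of \<rho> "sp r"] R assms by (intro clip_eq_gap) auto
    moreover have "clip (\<rho> powr (-\<alpha>) - sm r powr (-\<alpha>)) = b - a"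
      using powr_neg_strict_antimono[of \<rho> "rm r"] R 4 assms by (intro clip_eq_gap) auto
    ultimately show ?thesis using 4 R by (auto simp: block_profile_def block_profile_clipped_def)
  qed
qed

lemma continuous_on_profile_from_rp: "continuous_on {rp N..} profile"
proof (induction N)
  case 0
  have "{rp 0..} = {T / 2..T} \<union> {T..}" using T_pos by auto
  moreover have "continuous_on {T / 2..T} profile"
    by (rule continuous_on_eq[of _ "\<lambda>\<rho>. - (2 * a / T) * \<rho> + 2 * a"])
       (use T_pos in \<open>auto intro!: continuous_intros simp: profile_linear\<close>)
  moreover have "continuous_on {T..} profile"
    by (rule continuous_on_eq[of _ "\<lambda>_. 0"]) (auto simp: profile_outside)
  ultimately show ?case by (metis continuous_on_closed_Un closed_atLeast closed_atLeastAtMost)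
next
  case (Suc N)
  have "{rp (Suc N)..} = {rp (Suc N)..rp N} \<union> {rp N..}"
    using rp_antimono[of N "Suc N"] by auto
  moreover have "continuous_on {rp (Suc N)..rp N} profile"
  proof (rule continuous_on_eq)
    show "continuous_on {rp (Suc N)..rp N} (block_profile_clipped (rp N))"
      unfolding block_profile_clipped_def clip_def
      using rp_pos[of "Suc N"] by (intro continuous_intros) auto
    show "block_profile_clipped (rp N) \<rho> = profile \<rho>" if "\<rho> \<in> {rp (Suc N)..rp N}" for \<rho>
      using that profile_block[of N \<rho>] block_profile_eq_clipped[of "rp N" \<rho>] rp_pos[of "Suc N"]
        rp_pos[of N] by auto
  qed
  ultimately show ?case using Suc by (metis continuous_on_closed_Un closed_atLeast closed_atLeastAtMost)
qed

lemma isCont_profile: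
  assumes "\<rho> > 0"
  shows "isCont profile \<rho>"
proof -
  obtain N where "rp N < \<rho>" using rp_eventually_less assms by blast
  then show ?thesis
    by (intro continuous_on_interior[OF continuous_on_profile_from_rp[of N]]) simp
qed

lemma abs_profile_le: "\<rho> > 0 \<Longrightarrow> \<bar>profile \<rho>\<bar> \<le> 2 * \<bar>a\<bar> + \<bar>b\<bar>"
proof -
  assume "\<rho> > 0"
  consider "T \<le> \<rho>" | "T / 2 \<le> \<rho>" "\<rho> \<le> T" | "\<rho> < T / 2" by linarith
  then show ?thesis
  proof cases
    case 1
    then show ?thesis by (simp add: profile_outside)
  next
    case 2
    have "\<bar>- (2 * a / T) * \<rho> + 2 * a\<bar> = \<bar>2 * a\<bar> * \<bar>1 - \<rho> / T\<bar>"
      using T_pos by (simp add: field_simps abs_mult[symmetric])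
    also have "\<dots> \<le> \<bar>2 * a\<bar> * 1" using 2 T_pos by (intro mult_left_mono) (auto simp: field_simps)
    finally show ?thesis using 2 by (simp add: profile_linear)
  next
    case 3
    obtain k where k: "rp (Suc k) \<le> \<rho>" "\<rho> < rp k" using block_exists[OF \<open>\<rho> > 0\<close> 3] by blast
    then have "profile \<rho> = block_profile_clipped (rp k) \<rho>"
      using profile_block_open block_profile_eq_clipped \<open>\<rho> > 0\<close> rp_pos[of k] by auto
    then show ?thesis using clip_bounds a_less_b
      unfolding block_profile_clipped_def by (smt (verit))
  qed
qed

lemma has_real_derivative_neg_powr:
  "y > 0 \<Longrightarrow> ((\<lambda>y. y powr (-\<alpha>)) has_real_derivative - \<alpha> * y powr (-\<alpha>-1)) (at y)"
  using has_real_derivative_powr[of y "-\<alpha>"] by simp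

lemma
  assumes "r > 0" "\<rho> > 0" "\<rho> \<notin> {sp r, sm r, rm r}"
  shows has_real_derivative_block_profile:
      "(block_profile a b \<alpha> r has_real_derivative block_profile_deriv a b \<alpha> r \<rho>) (at \<rho>)"
    and isCont_block_profile_deriv: "isCont (block_profile_deriv a b \<alpha> r) \<rho>"
proof -
  note R = block_radii[OF assms(1)]
  consider "sp r < \<rho>" | "sm r < \<rho>" "\<rho> < sp r" | "rm r < \<rho>" "\<rho> < sm r" | "\<rho> < rm r"
    using assms(3) by fastforce
  then have "(block_profile a b \<alpha> r has_real_derivative block_profile_deriv a b \<alpha> r \<rho>) (at \<rho>) \<and>
      isCont (block_profile_deriv a b \<alpha> r) \<rho>"
  proof cases
    case 1
    show ?thesis
    proof (rule has_real_derivative_isCont_cong_open[of "{sp r<..}"])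
      show "((\<lambda>y. y powr (-\<alpha>) - r powr (-\<alpha>) + a) has_real_derivative - \<alpha> * \<rho> powr (-\<alpha>-1)) (at \<rho>)"
        using has_real_derivative_neg_powr[OF assms(2)] assms(2) by (auto intro!: derivative_eq_intros)
      show "isCont (\<lambda>y. - \<alpha> * y powr (-\<alpha>-1)) \<rho>" using assms(2) by (intro continuous_intros) auto
    qed (use 1 in \<open>auto simp: block_profile_def block_profile_deriv_def\<close>)
  next
    case 2
    show ?thesis
      by (rule has_real_derivative_isCont_cong_open[of "{sm r<..<sp r}" _ _ "\<lambda>_. b" _ "\<lambda>_. 0"])
         (use 2 in \<open>auto simp: block_profile_def block_profile_deriv_def\<close>)
  next
    case 3
    show ?thesis
    proof (rule has_real_derivative_isCont_cong_open[of "{rm r<..<sm r}"])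
      show "((\<lambda>y. b - (y powr (-\<alpha>) - sm r powr (-\<alpha>))) has_real_derivative \<alpha> * \<rho> powr (-\<alpha>-1)) (at \<rho>)"
        using has_real_derivative_neg_powr[OF assms(2)] assms(2) by (auto intro!: derivative_eq_intros)
      show "isCont (\<lambda>y. \<alpha> * y powr (-\<alpha>-1)) \<rho>" using assms(2) by (intro continuous_intros) auto
    qed (use 3 R in \<open>auto simp: block_profile_def block_profile_deriv_def\<close>)
  next
    case 4
    show ?thesis
      by (rule has_real_derivative_isCont_cong_open[of "{..<rm r}" _ _ "\<lambda>_. a" _ "\<lambda>_. 0"])
         (use 4 R in \<open>auto simp: block_profile_def block_profile_deriv_def\<close>)
  qed
  then show "(block_profile a b \<alpha> r has_real_derivative block_profile_deriv a b \<alpha> r \<rho>) (at \<rho>)"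
    and "isCont (block_profile_deriv a b \<alpha> r) \<rho>" by auto
qed

lemma profile_deriv_block:
  assumes "rp (Suc k) \<le> \<rho>" "\<rho> < rp k" "0 < \<rho>"
  shows "profile' \<rho> = block_profile_deriv a b \<alpha> (rp k) \<rho>"
  using assms block_eq[OF assms(1,2)] rp_le_T_half[of k] T_pos by (simp add: mesa_profile_deriv_def)

lemma profile_deriv_outside: "T < \<rho> \<Longrightarrow> profile' \<rho> = 0"
  by (simp add: mesa_profile_deriv_def)

lemma has_real_derivative_profile:
  assumes "\<rho> > 0" "\<rho> \<notin> mesa_breakpoints T a b \<alpha>"
  shows "(profile has_real_derivative profile' \<rho>) (at \<rho>) \<and> isCont profile' \<rho>"
proof -
  have not_break: "\<rho> \<noteq> T" "\<rho> \<noteq> T / 2" "\<rho> \<notin> {rp k, sp (rp k), sm (rp k), rm (rp k)}" for k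
    using assms(2) unfolding mesa_breakpoints_def Let_def by auto
  consider "T < \<rho>" | "T / 2 < \<rho>" "\<rho> < T" | "\<rho> < T / 2" using not_break by linarith
  then show ?thesis
  proof cases
    case 1
    then show ?thesis
      by (intro has_real_derivative_isCont_cong_open[of "{T<..}" _ _ "\<lambda>_. 0" _ "\<lambda>_. 0"])
         (auto simp: profile_outside profile_deriv_outside)
  next
    case 2
    then show ?thesis
      by (intro has_real_derivative_isCont_cong_open[of "{T / 2<..<T}" _ _
            "\<lambda>y. - (2 * a / T) * y + 2 * a" _ "\<lambda>_. - (2 * a / T)"])
         (auto simp: profile_linear mesa_profile_deriv_def intro!: derivative_eq_intros)
  next
    case 3
    obtain k where k: "rp (Suc k) \<le> \<rho>" "\<rho> < rp k" using block_exists[OF assms(1) 3] by blast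
    then have "rp (Suc k) < \<rho>" using not_break(3)[of "Suc k"] by auto
    have \<rho>: "\<rho> \<notin> {sp (rp k), sm (rp k), rm (rp k)}" using not_break(3)[of k] by auto
    show ?thesis
    proof (rule has_real_derivative_isCont_cong_open[of "{rp (Suc k)<..<rp k}" _ _
          "block_profile a b \<alpha> (rp k)" _ "block_profile_deriv a b \<alpha> (rp k)"])
      show "(block_profile a b \<alpha> (rp k) has_real_derivative block_profile_deriv a b \<alpha> (rp k) \<rho>) (at \<rho>)"
        by (rule has_real_derivative_block_profile[OF rp_pos assms(1) \<rho>])
      show "isCont (block_profile_deriv a b \<alpha> (rp k)) \<rho>"
        by (rule isCont_block_profile_deriv[OF rp_pos assms(1) \<rho>])
    qed (use k \<open>rp (Suc k) < \<rho>\<close> rp_pos[of "Suc k"] in \<open>auto simp: profile_block_open profile_deriv_block\<close>)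
  qed
qed

lemma borel_measurable_profile_deriv: "profile' \<in> borel_measurable borel"
proof (rule borel_measurable_continuous_countable_exceptions)
  show "countable (insert 0 (mesa_breakpoints T a b \<alpha>))"
    using countable_mesa_breakpoints by simp
  have "continuous_on {..<0} profile'"
    by (rule continuous_on_eq[of _ "\<lambda>_. 0"]) (use T_pos in \<open>auto simp: mesa_profile_deriv_def\<close>)
  then have negative: "isCont profile' \<rho>" if "\<rho> < 0" for \<rho>
    using that by (intro continuous_on_interior) (auto simp: interior_open)
  then show "continuous_on (- insert 0 (mesa_breakpoints T a b \<alpha>)) profile'"
  proof (intro continuous_at_imp_continuous_on ballI)
    fix \<rho> assume "\<rho> \<in> - insert 0 (mesa_breakpoints T a b \<alpha>)"
    then show "isCont profile' \<rho>"
      using negative has_real_derivative_profile[of \<rho>]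
      by (cases "\<rho> < 0") auto
  qed
qed

lemma abs_profile_deriv_le: "\<rho> > 0 \<Longrightarrow> \<bar>profile' \<rho>\<bar> \<le> \<alpha> * \<rho> powr (-\<alpha>-1) + 2 * \<bar>a\<bar> / T"
  using alpha_pos T_pos
  by (auto simp: mesa_profile_deriv_def block_profile_deriv_def Let_def abs_mult)

lemma finite_mesa_breakpoints_ge:
  assumes "\<delta> > 0"
  shows "finite (mesa_breakpoints T a b \<alpha> \<inter> {\<delta>..})"
proof -
  obtain N where N: "rp N < \<delta>" using rp_eventually_less[OF assms] by blast
  have "mesa_breakpoints T a b \<alpha> \<inter> {\<delta>..} \<subseteq> {T, T / 2} \<union> (\<Union>k<N. {rp k, sp (rp k), sm (rp k), rm (rp k)})"
  proof
    fix y assume y: "y \<in> mesa_breakpoints T a b \<alpha> \<inter> {\<delta>..}"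
    show "y \<in> {T, T / 2} \<union> (\<Union>k<N. {rp k, sp (rp k), sm (rp k), rm (rp k)})"
    proof (cases "y \<in> {T, T / 2}")
      case False
      then obtain k where k: "y \<in> {rp k, sp (rp k), sm (rp k), rm (rp k)}"
        using y unfolding mesa_breakpoints_def Let_def by blast
      then have "y \<le> rp k" using block_radii[OF rp_pos[of k]] by auto
      then have "k < N" using y N rp_antimono[of N k] by (cases "k < N") auto
      then show ?thesis using k by blast
    qed blast
  qed
  then show ?thesis by (rule finite_subset) simp
qed

end

section \<open>The mesa function\<close>

definition mesa_pderiv :: "real^'n::finite \<Rightarrow> real \<Rightarrow> real \<Rightarrow> real \<Rightarrow> real \<Rightarrow> real^'n \<Rightarrow> real^'n \<Rightarrow> real"
  where "mesa_pderiv c T a b \<alpha> e x =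
    (if x = c then 0 else mesa_profile_deriv T a b \<alpha> (norm (x - c)) * ((x - c) \<bullet> e) / norm (x - c))"

context mesa_parameters
begin

lemma abs_mesa_le: "\<bar>mesa c T a b \<alpha> x\<bar> \<le> 2 * \<bar>a\<bar> + \<bar>b\<bar>"
  using abs_profile_le[of "norm (x - c)"] by (auto simp: mesa_def)

lemma mesa_eq_0: "x \<notin> cball c T \<Longrightarrow> mesa c T a b \<alpha> x = 0"
  using profile_outside T_pos by (auto simp: mesa_def dist_norm norm_minus_commute)

lemma borel_measurable_mesa: "mesa c T a b \<alpha> \<in> borel_measurable borel"
proof (rule borel_measurable_continuous_countable_exceptions[of "{c}"])
  have "isCont (\<lambda>x. profile (norm (x - c))) x" if "x \<noteq> c" for x
    using that by (intro continuous_intros isCont_o2[OF _ isCont_profile]) auto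
  then have "continuous_on (- {c}) (\<lambda>x. profile (norm (x - c)))"
    by (intro continuous_at_imp_continuous_on) auto
  then show "continuous_on (- {c}) (mesa c T a b \<alpha>)"
    by (rule continuous_on_eq) (auto simp: mesa_def)
qed simp

lemma borel_measurable_mesa_pderiv: "mesa_pderiv c T a b \<alpha> e \<in> borel_measurable borel"
  using borel_measurable_profile_deriv unfolding mesa_pderiv_def by measurable

lemma abs_mesa_pderiv_le:
  assumes "norm e = 1"
  shows "\<bar>mesa_pderiv c T a b \<alpha> e x\<bar>
           \<le> (\<alpha> * norm (x - c) powr (-\<alpha>-1) + 2 * \<bar>a\<bar> / T) * indicator (cball c T) x"
proof (cases "x = c")
  case True
  then show ?thesis using T_pos by (simp add: mesa_pderiv_def)
next
  case False
  then have r: "norm (x - c) > 0" by auto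
  have "\<bar>(x - c) \<bullet> e\<bar> \<le> norm (x - c)" using Cauchy_Schwarz_ineq2[of "x - c" e] assms by simp
  then have "\<bar>((x - c) \<bullet> e) / norm (x - c)\<bar> \<le> 1" using r by (simp add: divide_le_eq_1)
  then have "\<bar>profile' (norm (x - c))\<bar> * \<bar>((x - c) \<bullet> e) / norm (x - c)\<bar> \<le> \<bar>profile' (norm (x - c))\<bar>"
    by (rule mult_left_le) simp
  then have "\<bar>mesa_pderiv c T a b \<alpha> e x\<bar> \<le> \<bar>profile' (norm (x - c))\<bar>"
    using False by (simp add: mesa_pderiv_def abs_mult)
  moreover have "profile' (norm (x - c)) = 0" if "x \<notin> cball c T"
    using that by (intro profile_deriv_outside) (auto simp: dist_norm norm_minus_commute)
  ultimately show ?thesis using abs_profile_deriv_le[OF r] by (auto simp: indicator_def)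
qed

lemma
  fixes x c e :: "real^'n::finite"
  assumes line: "\<forall>s. x + s *\<^sub>R e \<noteq> c"
  shows isCont_mesa_along_line: "isCont (\<lambda>t. mesa c T a b \<alpha> (x + t *\<^sub>R e)) t"
    and has_real_derivative_mesa_along_line:
      "norm (x + t *\<^sub>R e - c) \<notin> mesa_breakpoints T a b \<alpha> \<Longrightarrow>
       ((\<lambda>t. mesa c T a b \<alpha> (x + t *\<^sub>R e)) has_real_derivative mesa_pderiv c T a b \<alpha> e (x + t *\<^sub>R e)) (at t)"
proof -
  define \<rho> where "\<rho> t = norm (x + t *\<^sub>R e - c)" for t
  have \<rho>_pos: "\<rho> t > 0" for t using line unfolding \<rho>_def by auto
  have on_line: "(\<lambda>t. mesa c T a b \<alpha> (x + t *\<^sub>R e)) = (\<lambda>t. profile (\<rho> t))"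
    using line unfolding \<rho>_def mesa_def by auto
  have "isCont \<rho> t" unfolding \<rho>_def by (intro continuous_intros)
  from isCont_o2[OF this isCont_profile[OF \<rho>_pos]]
  show "isCont (\<lambda>t. mesa c T a b \<alpha> (x + t *\<^sub>R e)) t" unfolding on_line .
  assume "norm (x + t *\<^sub>R e - c) \<notin> mesa_breakpoints T a b \<alpha>"
  then have "(profile has_real_derivative profile' (\<rho> t)) (at (\<rho> t))"
    using has_real_derivative_profile[OF \<rho>_pos] unfolding \<rho>_def by blast
  moreover have "(\<rho> has_real_derivative ((x + t *\<^sub>R e - c) \<bullet> e) / \<rho> t) (at t)"
    unfolding \<rho>_def using line by (intro has_real_derivative_norm_line) auto
  ultimately have "((\<lambda>t. profile (\<rho> t)) has_real_derivative
      profile' (\<rho> t) * (((x + t *\<^sub>R e - c) \<bullet> e) / \<rho> t)) (at t)"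
    by (rule DERIV_chain2)
  then show "((\<lambda>t. mesa c T a b \<alpha> (x + t *\<^sub>R e)) has_real_derivative mesa_pderiv c T a b \<alpha> e (x + t *\<^sub>R e)) (at t)"
    using line unfolding on_line by (simp add: \<rho>_def mesa_pderiv_def)
qed

text \<open>On a line avoiding the centre, \<open>t \<mapsto> tent t * U (x + t e) * \<phi> (x + t e)\<close> is continuous,
  vanishes at \<open>t = \<plusminus>1\<close> and is differentiable at all but finitely many \<open>t \<in> (-1, 1)\<close>: only
  finitely many breakpoint radii exceed the distance of the segment to the centre, and the line
  meets each of those spheres at most twice.\<close>
lemma mesa_tent_line_integral:
  fixes x c e :: "real^'n::finite" and \<phi> h :: "real^'n \<Rightarrow> real"
  assumes e: "norm e = 1" and line: "\<forall>t. x + t *\<^sub>R e \<noteq> c"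
    and \<phi>: "continuous_on UNIV \<phi>"
    and h: "\<And>t. ((\<lambda>t. \<phi> (x + t *\<^sub>R e)) has_real_derivative h (x + t *\<^sub>R e)) (at t)"
  shows "((\<lambda>t. tent t * (mesa c T a b \<alpha> (x + t *\<^sub>R e) * h (x + t *\<^sub>R e))
           + tent_deriv t * (mesa c T a b \<alpha> (x + t *\<^sub>R e) * \<phi> (x + t *\<^sub>R e))
           + tent t * (mesa_pderiv c T a b \<alpha> e (x + t *\<^sub>R e) * \<phi> (x + t *\<^sub>R e))) has_integral 0) UNIV"
    (is "(?Q has_integral 0) UNIV")
proof -
  define U where "U t = mesa c T a b \<alpha> (x + t *\<^sub>R e)" for t
  define F where "F t = tent t * U t * \<phi> (x + t *\<^sub>R e)" for t
  obtain \<delta> where \<delta>: "\<delta> > 0" "\<forall>t\<in>{-1..1}. \<delta> \<le> norm (x + t *\<^sub>R e - c)"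
    using dist_line_point_bounded_below[OF line] by blast
  define S where "S = {0} \<union> (\<Union>r\<in>mesa_breakpoints T a b \<alpha> \<inter> {\<delta>..}. {t. norm (x + t *\<^sub>R e - c) = r})"
  have "finite S"
    unfolding S_def using finite_mesa_breakpoints_ge[OF \<delta>(1)] finite_line_sphere_intersection[OF e] by auto
  have "(F has_vector_derivative ?Q t) (at t)" if t: "t \<in> {-1<..<1} - S" for t
  proof -
    have "norm (x + t *\<^sub>R e - c) \<notin> mesa_breakpoints T a b \<alpha>" using \<delta> t unfolding S_def by auto
    then have U: "(U has_real_derivative mesa_pderiv c T a b \<alpha> e (x + t *\<^sub>R e)) (at t)"
      unfolding U_def by (rule has_real_derivative_mesa_along_line[OF line])
    have "t \<in> {-1<..<1} - {0}" using t unfolding S_def by auto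
    from DERIV_mult[OF DERIV_mult[OF has_real_derivative_tent[OF this] U] h]
    show ?thesis
      unfolding F_def U_def has_real_derivative_iff_has_vector_derivative[symmetric]
      by (simp add: algebra_simps)
  qed
  moreover have "continuous_on {-1..1} F"
  proof (intro continuous_at_imp_continuous_on ballI)
    fix t
    have "isCont tent t" "isCont \<phi> (x + t *\<^sub>R e)"
      using continuous_on_tent[of UNIV] \<phi> by (simp_all add: continuous_on_eq_continuous_at)
    moreover have "isCont (\<lambda>t. x + t *\<^sub>R e) t" by (intro continuous_intros)
    ultimately show "isCont F t"
      unfolding F_def U_def
      by (intro continuous_intros isCont_mesa_along_line[OF line] isCont_o2[where f = "\<lambda>t. x + t *\<^sub>R e" and g = \<phi>])
  qed
  ultimately have "(?Q has_integral F 1 - F (-1)) {-1..1}"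
    using \<open>finite S\<close> by (intro fundamental_theorem_of_calculus_interior_strong) auto
  then have "(?Q has_integral 0) {-1..1}" by (simp add: F_def tent_def)
  then show ?thesis
    by (rule has_integral_on_superset) (auto simp: tent_eq_0 tent_deriv_eq_0)
qed

lemma integrable_mesa_mult:
  fixes c :: "real^'n::finite"
  assumes "k \<in> borel_measurable borel" "\<And>x. \<bar>k x\<bar> \<le> B"
  shows "integrable lborel (\<lambda>x. mesa c T a b \<alpha> x * k x)"
proof (rule integrable_bounded_vanishing_outside_cball[where B = "(2 * \<bar>a\<bar> + \<bar>b\<bar>) * B" and c = c and R = T])
  show "(\<lambda>x. mesa c T a b \<alpha> x * k x) \<in> borel_measurable borel"
    using borel_measurable_mesa assms(1) by measurable
  show "\<bar>mesa c T a b \<alpha> x * k x\<bar> \<le> (2 * \<bar>a\<bar> + \<bar>b\<bar>) * B" for x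
    unfolding abs_mult using abs_mesa_le assms(2) by (intro mult_mono) auto
qed (simp add: mesa_eq_0)

lemma integrable_mesa_pderiv_mult:
  fixes c e :: "real^'n::finite"
  assumes "norm e = 1" "\<alpha> + 1 < real CARD('n)"
    and "k \<in> borel_measurable borel" "\<And>x. \<bar>k x\<bar> \<le> B"
  shows "integrable lborel (\<lambda>x. mesa_pderiv c T a b \<alpha> e x * k x)"
proof (rule integrable_bounded_by_norm_powr[where p = "\<alpha> + 1" and A = "\<alpha> * B" and K = "2 * \<bar>a\<bar> / T * B"])
  show "(\<lambda>x. mesa_pderiv c T a b \<alpha> e x * k x) \<in> borel_measurable borel"
    using borel_measurable_mesa_pderiv assms(3) by measurable
  fix x
  note bound = abs_mesa_pderiv_le[OF assms(1), of c x]
  have "\<bar>mesa_pderiv c T a b \<alpha> e x * k x\<bar>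
      \<le> (\<alpha> * norm (x - c) powr (-\<alpha>-1) + 2 * \<bar>a\<bar> / T) * indicator (cball c T) x * B"
    unfolding abs_mult using bound order.trans[OF abs_ge_zero bound] assms(4) by (intro mult_mono) auto
  moreover have "- (\<alpha> + 1) = -\<alpha> - 1" by simp
  ultimately show "\<bar>mesa_pderiv c T a b \<alpha> e x * k x\<bar>
      \<le> (\<alpha> * B * norm (x - c) powr (- (\<alpha> + 1)) + 2 * \<bar>a\<bar> / T * B) * indicator (cball c T) x"
    by (simp only:) (simp add: algebra_simps)
qed (use alpha_pos T_pos assms(2) in auto)

lemma L2_on_mesa:
  fixes c :: "real^'n::finite"
  assumes "\<Omega> \<in> sets lebesgue" "cball c T \<subseteq> \<Omega>"
  shows "L2_on \<Omega> (mesa c T a b \<alpha>)"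
proof (rule L2_on_if_vanishing_outside[OF assms(1) borel_measurable_mesa])
  show "integrable lborel (\<lambda>x. (mesa c T a b \<alpha> x)\<^sup>2)"
    unfolding power2_eq_square by (rule integrable_mesa_mult[OF borel_measurable_mesa abs_mesa_le])
qed (use assms(2) mesa_eq_0 in blast)

lemma L2_on_mesa_pderiv:
  fixes c e :: "real^'n::finite"
  assumes "\<Omega> \<in> sets lebesgue" "cball c T \<subseteq> \<Omega>" "norm e = 1" "2 * \<alpha> + 2 < real CARD('n)"
  shows "L2_on \<Omega> (mesa_pderiv c T a b \<alpha> e)"
proof (rule L2_on_if_vanishing_outside[OF assms(1) borel_measurable_mesa_pderiv])
  have "- (\<alpha> + 1) = -\<alpha> - 1" by simp
  then show "integrable lborel (\<lambda>x. (mesa_pderiv c T a b \<alpha> e x)\<^sup>2)"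
    using abs_mesa_pderiv_le[OF assms(3)] alpha_pos T_pos assms(4)
    by (intro integrable_square_bounded_by_norm_powr[where p = "\<alpha> + 1" and R = T and c = c]
        borel_measurable_mesa_pderiv) auto
  show "mesa_pderiv c T a b \<alpha> e x = 0" if "x \<notin> \<Omega>" for x
  proof -
    have "x \<notin> cball c T" using that assms(2) by blast
    then show ?thesis using abs_mesa_pderiv_le[OF assms(3), of c x] by simp
  qed
qed

lemma mesa_weak_identity:
  fixes c :: "real^'n::finite"
  assumes dim: "CARD('n) \<ge> 2" "\<alpha> + 1 < real CARD('n)" and \<phi>: "test_fun \<Omega> \<phi>"
  shows "integrable lborel (\<lambda>x. mesa c T a b \<alpha> x * pderiv_i i \<phi> x) \<and>
         integrable lborel (\<lambda>x. mesa_pderiv c T a b \<alpha> (axis i 1) x * \<phi> x) \<and>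
         (\<integral>x. mesa c T a b \<alpha> x * pderiv_i i \<phi> x \<partial>lborel)
           = - (\<integral>x. mesa_pderiv c T a b \<alpha> (axis i 1) x * \<phi> x \<partial>lborel)"
proof -
  define e where "e = (axis i 1 :: real^'n)"
  define U where "U = mesa c T a b \<alpha>"
  define g where "g = mesa_pderiv c T a b \<alpha> e"
  define h where "h = pderiv_i i \<phi>"
  have e: "norm e = 1" unfolding e_def by simp
  have [measurable]: "\<phi> \<in> borel_measurable borel" "h \<in> borel_measurable borel"
    unfolding h_def using continuous_on_test_fun[OF \<phi>] continuous_on_test_fun_pderiv[OF \<phi>]
    by (auto intro: borel_measurable_continuous_onI)
  obtain B1 where B1: "\<And>x. \<bar>\<phi> x\<bar> \<le> B1" using test_fun_bounded[OF \<phi>] by blast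
  obtain B2 where B2: "\<And>x. \<bar>h x\<bar> \<le> B2" using test_fun_pderiv_bounded[OF \<phi>] unfolding h_def by blast
  have Uh: "integrable lborel (\<lambda>x. U x * h x)"
    unfolding U_def by (rule integrable_mesa_mult) (use B2 in auto)
  have U\<phi>: "integrable lborel (\<lambda>x. U x * \<phi> x)"
    unfolding U_def by (rule integrable_mesa_mult) (use B1 in auto)
  have g\<phi>: "integrable lborel (\<lambda>x. g x * \<phi> x)"
    unfolding g_def by (rule integrable_mesa_pderiv_mult[OF e dim(2)]) (use B1 in auto)
  have h_line: "((\<lambda>t. \<phi> (x + t *\<^sub>R e)) has_real_derivative h (x + t *\<^sub>R e)) (at t)" for x t
    unfolding h_def pderiv_i_def e_def
    by (rule has_real_derivative_along_line[OF test_fun_differentiable[OF \<phi>]])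
  have "AE x in lborel. \<forall>t. x + t *\<^sub>R e \<noteq> c" using dim(1) by (intro AE_line_avoids_point) simp
  then have "AE x in lborel. ((\<lambda>t. tent t * (U (x + t *\<^sub>R e) * h (x + t *\<^sub>R e))
      + tent_deriv t * (U (x + t *\<^sub>R e) * \<phi> (x + t *\<^sub>R e))
      + tent t * (g (x + t *\<^sub>R e) * \<phi> (x + t *\<^sub>R e))) has_integral 0) UNIV"
  proof eventually_elim
    case (elim x)
    show ?case unfolding U_def g_def
      by (rule mesa_tent_line_integral[OF e elim continuous_on_test_fun[OF \<phi>] h_line])
  qed
  from tent_averaging_identity[OF Uh U\<phi> g\<phi> this]
  show ?thesis using Uh g\<phi> unfolding U_def g_def h_def e_def by simp
qed

lemma weak_pderiv_mesa:
  fixes c :: "real^'n::finite"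
  assumes "\<Omega> \<in> sets lebesgue" "cball c T \<subseteq> \<Omega>" "CARD('n) \<ge> 2" "\<alpha> + 1 < real CARD('n)"
  shows "weak_pderiv \<Omega> i (mesa c T a b \<alpha>) (mesa_pderiv c T a b \<alpha> (axis i 1))"
proof (rule weak_pderiv_if_vanishing_outside[OF assms(1) borel_measurable_mesa _ borel_measurable_mesa_pderiv])
  show "mesa c T a b \<alpha> x = 0" if "x \<notin> \<Omega>" for x
    using that assms(2) mesa_eq_0 by blast
  show "mesa_pderiv c T a b \<alpha> (axis i 1) x = 0" if "x \<notin> \<Omega>" for x
  proof -
    have "x \<notin> cball c T" using that assms(2) by blast
    then show ?thesis using abs_mesa_pderiv_le[of "axis i 1" c x] by simp
  qed
qed (rule mesa_weak_identity[OF assms(3,4)])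

end

theorem lemma1p1:
  fixes \<Omega> :: "(real^'n::finite) set"
    and c :: "real^'n" and T a b \<alpha> :: real
  assumes "CARD('n) > 2"
    and "open \<Omega>" and "connected \<Omega>"
    and "c \<in> \<Omega>" and "T > 0" and "cball c T \<subseteq> \<Omega>"
    and "a < b"
    and "0 < \<alpha>" and "\<alpha> < (real CARD('n) - 2) / 2"
  shows "H1 \<Omega> (mesa c T a b \<alpha>)"
proof -
  interpret mesa_parameters T a b \<alpha> using assms by unfold_locales
  have \<Omega>: "\<Omega> \<in> sets lebesgue" using \<open>open \<Omega>\<close> by simp
  have dim: "CARD('n) \<ge> 2" "2 * \<alpha> + 2 < real CARD('n)" using assms(1,9) by (auto simp: field_simps)
  have "L2_on \<Omega> (mesa_pderiv c T a b \<alpha> (axis i 1)) \<and>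
        weak_pderiv \<Omega> i (mesa c T a b \<alpha>) (mesa_pderiv c T a b \<alpha> (axis i 1))" for i
    using L2_on_mesa_pderiv[OF \<Omega> assms(6) _ dim(2)] weak_pderiv_mesa[OF \<Omega> assms(6) dim(1)] dim(2)
    by simp
  then show ?thesis
    unfolding H1_def using L2_on_mesa[OF \<Omega> assms(6)] by blast
qed

end
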